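(* Let $Q$ be a nontrivial qubit stabilizer code on $n$ physical qubits, and suppose the transversal rotation $Z(\theta_1)\otimes Z(\theta_2)\otimes\cdots\otimes Z(\theta_n)$, with arbitrary real angles $\theta_j$, implements a nontrivial logical gate on $Q$. Then, up to single-qubit factors whose combined action on the code is the logical identity, the transversal rotation is of the form $Z(a_1/2^{k})\otimes\cdots\otimes Z(a_n/2^{k})$ for integers $a_1,\dots,a_n$ and $k\ge 0$; i.e. the implemented logical gate coincides with the one implemented by such a rotation with all angles of the form $a/2^k$.
   Context: A stabilizer code on $n$ qubits is the common $+1$ eigenspace of an abelian subgroup $\mathcal{S}$ of the $n$-qubit Pauli group not containing $-I$. Logical operators are elements of the normalizer of $\mathcal{S}$ not in $\mathcal{S}$; the distance is the minimum weight of a Pauli logical operator; nontrivial means distance at least $2$. $Z(\theta)=\mathrm{diag}(1,e^{i\pi\theta})$. A transversal rotation implements a nontrivial logical gate if it maps the code space to itself and acts on it as a logical unitary that is not the identity up to global phase. *)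

theory Defs
  imports Complex_Main
begin

text \<open>Computational basis of n qubits: bit strings (bool lists) of length n.
  Operators are matrices indexed by bit strings, vanishing outside the basis;
  states are functions from bit strings to complex amplitudes.\<close>

definition bitstrs :: "nat \<Rightarrow> bool list set" where
  "bitstrs n = {b. length b = n}"

type_synonym qmat = "bool list \<Rightarrow> bool list \<Rightarrow> complex"
type_synonym qvec = "bool list \<Rightarrow> complex"

definition mmult :: "nat \<Rightarrow> qmat \<Rightarrow> qmat \<Rightarrow> qmat" where
  "mmult n A B = (\<lambda>b d. \<Sum>c\<in>bitstrs n. A b c * B c d)"

definition mapply :: "nat \<Rightarrow> qmat \<Rightarrow> qvec \<Rightarrow> qvec" where
  "mapply n A v = (\<lambda>b. \<Sum>c\<in>bitstrs n. A b c * v c)"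

definition idm :: "nat \<Rightarrow> qmat" where
  "idm n = (\<lambda>b d. if length b = n \<and> b = d then 1 else 0)"

definition mneg :: "qmat \<Rightarrow> qmat" where
  "mneg A = (\<lambda>b d. - A b d)"

definition madj :: "qmat \<Rightarrow> qmat" where
  "madj A = (\<lambda>b d. cnj (A d b))"

text \<open>The Pauli operator i^c X^x Z^z, acting as |b'> \<mapsto> i^c (-1)^(z.b') |b' xor x>.\<close>
definition pauli_mat :: "nat \<Rightarrow> nat \<Rightarrow> bool list \<Rightarrow> bool list \<Rightarrow> qmat" where
  "pauli_mat n c x z = (\<lambda>b b'.
     if length b = n \<and> length b' = n \<and> b = map2 (\<noteq>) x b'
     then \<i> ^ c * (-1) ^ length (filter id (map2 (\<and>) z b'))
     else 0)"

definition pauli_group :: "nat \<Rightarrow> qmat set" where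
  "pauli_group n = {pauli_mat n c x z | c x z. length x = n \<and> length z = n}"

definition pweight :: "nat \<Rightarrow> bool list \<Rightarrow> bool list \<Rightarrow> nat" where
  "pweight n x z = card {j. j < n \<and> (x ! j \<or> z ! j)}"

definition stabilizer_group :: "nat \<Rightarrow> qmat set \<Rightarrow> bool" where
  "stabilizer_group n S \<longleftrightarrow>
     S \<subseteq> pauli_group n \<and> idm n \<in> S \<and>
     (\<forall>A\<in>S. \<forall>B\<in>S. mmult n A B \<in> S) \<and>
     (\<forall>A\<in>S. madj A \<in> S) \<and>
     (\<forall>A\<in>S. \<forall>B\<in>S. mmult n A B = mmult n B A) \<and>
     mneg (idm n) \<notin> S"

definition codespace :: "nat \<Rightarrow> qmat set \<Rightarrow> qvec set" where
  "codespace n S = {v. (\<forall>b. length b \<noteq> n \<longrightarrow> v b = 0) \<and> (\<forall>g\<in>S. mapply n g v = v)}"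

definition is_logical :: "nat \<Rightarrow> qmat set \<Rightarrow> nat \<Rightarrow> bool list \<Rightarrow> bool list \<Rightarrow> bool" where
  "is_logical n S c x z \<longleftrightarrow>
     length x = n \<and> length z = n \<and>
     (\<lambda>A. mmult n (mmult n (pauli_mat n c x z) A) (madj (pauli_mat n c x z))) ` S = S \<and>
     (\<forall>c'. pauli_mat n c' x z \<notin> S)"

text \<open>Nontrivial: distance at least 2, i.e. every logical operator has weight \<ge> 2.\<close>
definition nontrivial_code :: "nat \<Rightarrow> qmat set \<Rightarrow> bool" where
  "nontrivial_code n S \<longleftrightarrow> (\<forall>c x z. is_logical n S c x z \<longrightarrow> pweight n x z \<ge> 2)"

text \<open>Transversal rotation Z(\<theta>_0) \<otimes> ... \<otimes> Z(\<theta>_(n-1)), Z(\<theta>) = diag(1, e^(i \<pi> \<theta>)).\<close>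
definition zrot :: "nat \<Rightarrow> (nat \<Rightarrow> real) \<Rightarrow> qmat" where
  "zrot n \<theta> = (\<lambda>b d. if length b = n \<and> b = d
       then (\<Prod>j<n. if b ! j then cis (pi * \<theta> j) else 1) else 0)"

definition implements_nontrivial_logical :: "nat \<Rightarrow> qmat set \<Rightarrow> qmat \<Rightarrow> bool" where
  "implements_nontrivial_logical n S U \<longleftrightarrow>
     (\<forall>v\<in>codespace n S. mapply n U v \<in> codespace n S) \<and>
     \<not> (\<exists>c. \<forall>v\<in>codespace n S. mapply n U v = (\<lambda>b. c * v b))"

end

theory Submission
  imports Defs
begin

text \<open>The rotation acts on the basis vector \<open>|b\<rangle>\<close> by the phase \<open>e^{i\<pi>\<psi>(b)}\<close>, where \<open>\<psi>(b)\<close> is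
  the sum of the angles over the set bits of \<open>b\<close>. Let \<open>L\<close> be the set of basis strings on which
  some code vector is nonzero and \<open>G\<close> the set of \<open>X\<close>-parts of stabilizers. Then \<open>G\<close> is a
  subspace of \<open>GF(2)\<^sup>n\<close>, \<open>L\<close> is an affine subspace, and since every stabilizer ties the
  amplitudes at \<open>b\<close> and \<open>x \<oplus> b\<close>, a diagonal gate preserving the code must satisfy
  \<open>\<psi>(x \<oplus> b) - \<psi>(b) \<in> \<int>\<close> for \<open>b \<in> L\<close>, \<open>x \<in> G\<close>. Distance at least two means that every
  qubit on which \<open>L\<close> varies is flipped by some \<open>x \<in> G\<close> (otherwise \<open>Z\<^sub>j\<close> is a logical of weight
  one), and averaging over \<open>G\<close> yields \<open>|G| (\<psi>(b) - \<psi>(b\<^sub>0)) \<in> \<int>\<close>. Finally, on a subspace \<open>V\<close>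
  of \<open>GF(2)\<^sup>n\<close> any weights whose masked sums lie in \<open>2\<^sup>-\<^sup>m\<int>\<close> can be replaced by weights in
  \<open>2\<^sup>-\<^sup>m|V|\<^sup>-\<^sup>1\<int>\<close> with the same masked sums, by a character-sum computation; as \<open>|G|\<close> and \<open>|V|\<close>
  are powers of two, the relative phases on \<open>L\<close> are realised by dyadic angles, and the global phase
  absorbs the rest.\<close>

section \<open>Bit strings\<close>

definition bxor :: "bool list \<Rightarrow> bool list \<Rightarrow> bool list" where
  "bxor a b = map2 (\<noteq>) a b"

lemma length_bxor [simp]: "length (bxor a b) = min (length a) (length b)"
  by (simp add: bxor_def)

lemma nth_bxor [simp]: "j < length a \<Longrightarrow> j < length b \<Longrightarrow> bxor a b ! j = (a ! j \<noteq> b ! j)"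
  by (simp add: bxor_def)

lemma bxor_commute: "bxor a b = bxor b a"
  by (rule nth_equalityI) auto

lemma bxor_cancel_left: "length a = length b \<Longrightarrow> bxor a (bxor a b) = b"
  by (rule nth_equalityI) auto

lemma bxor_replicate_False [simp]: "length b = n \<Longrightarrow> bxor (replicate n False) b = b"
  by (rule nth_equalityI) auto

lemma bxor_self: "bxor a a = replicate (length a) False"
  by (rule nth_equalityI) auto

lemma bxor_eq_iff:
  "length x = n \<Longrightarrow> length b = n \<Longrightarrow> length b' = n \<Longrightarrow> (b = bxor x b') = (b' = bxor x b)"
  by (metis bxor_cancel_left)

lemma finite_bitstrs: "finite (bitstrs n)"
  using finite_lists_length_eq[of "UNIV :: bool set" n] by (simp add: bitstrs_def)

lemma sum_bitstrs_delta:
  "length b = n \<Longrightarrow> (\<Sum>e\<in>bitstrs n. if e = b then f e else 0) = f b"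
  by (simp only: sum.delta[OF finite_bitstrs]) (simp add: bitstrs_def)

definition masked_sum :: "nat \<Rightarrow> (nat \<Rightarrow> real) \<Rightarrow> bool list \<Rightarrow> real" where
  "masked_sum n c b = (\<Sum>j<n. if b ! j then c j else 0)"

lemma masked_sum_bxor_diff:
  assumes "length x = n" "length b = n"
  shows "masked_sum n c (bxor x b) - masked_sum n c b
           = masked_sum n (\<lambda>j. if b ! j then - c j else c j) x"
  unfolding masked_sum_def using assms
  by (simp add: sum_subtractf[symmetric]) (rule sum.cong, auto)

lemma sum_indicator_card:
  "finite A \<Longrightarrow> (\<Sum>a\<in>A. if P a then 1 else 0 :: real) = real (card {a\<in>A. P a})"
  by (simp add: sum.inter_filter[symmetric])

section \<open>Subspaces of bit strings\<close>

definition bsubspace :: "nat \<Rightarrow> bool list set \<Rightarrow> bool" where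
  "bsubspace n V \<longleftrightarrow>
     replicate n False \<in> V \<and> (\<forall>v\<in>V. length v = n) \<and> (\<forall>v\<in>V. \<forall>w\<in>V. bxor v w \<in> V)"

lemma bsubspace_length: "bsubspace n V \<Longrightarrow> v \<in> V \<Longrightarrow> length v = n"
  unfolding bsubspace_def by blast

lemma bsubspace_bxor: "bsubspace n V \<Longrightarrow> v \<in> V \<Longrightarrow> w \<in> V \<Longrightarrow> bxor v w \<in> V"
  unfolding bsubspace_def by blast

lemma bsubspace_finite: "bsubspace n V \<Longrightarrow> finite V"
  by (rule finite_subset[OF _ finite_bitstrs[of n]]) (auto simp: bitstrs_def bsubspace_length)

lemma bsubspace_translate_affine:
  assumes "\<And>b. b \<in> L \<Longrightarrow> length b = n" and "b0 \<in> L"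
    and "\<And>b1 b2 b3. b1 \<in> L \<Longrightarrow> b2 \<in> L \<Longrightarrow> b3 \<in> L \<Longrightarrow> bxor b1 (bxor b2 b3) \<in> L"
  shows "bsubspace n (bxor b0 ` L)"
  unfolding bsubspace_def
proof (intro conjI ballI)
  show "replicate n False \<in> bxor b0 ` L"
    using assms(1,2) bxor_self[of b0] by (metis image_eqI)
  fix v w assume v: "v \<in> bxor b0 ` L" and w: "w \<in> bxor b0 ` L"
  then show "length v = n" using assms(1,2) by auto
  obtain b1 b2 where b: "b1 \<in> L" "b2 \<in> L" "v = bxor b0 b1" "w = bxor b0 b2"
    using v w by auto
  have "bxor v w = bxor b0 (bxor b1 (bxor b0 b2))"
    using b assms(1,2) by (intro nth_equalityI) auto
  then show "bxor v w \<in> bxor b0 ` L" using assms(3)[OF b(1) assms(2) b(2)] by auto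
qed

lemma bsubspace_card_translate:
  assumes V: "bsubspace n V" and w: "w \<in> V" and PQ: "\<And>a. a \<in> V \<Longrightarrow> P a = Q (bxor w a)"
  shows "card {a\<in>V. P a} = card {a\<in>V. Q a}"
proof -
  have cancel: "bxor w (bxor w a) = a" if "a \<in> V" for a
    using bxor_cancel_left bsubspace_length[OF V] w that by simp
  have "bij_betw (bxor w) {a\<in>V. P a} {a\<in>V. Q a}"
    by (rule bij_betw_byWitness[where f'="bxor w"])
       (use cancel PQ bsubspace_bxor[OF V w] in \<open>auto simp: image_subset_iff\<close>)
  then show ?thesis by (rule bij_betw_same_card)
qed

lemma bsubspace_card_coordinate:
  assumes V: "bsubspace n V" and w: "w \<in> V" "w ! j" and j: "j < n"
  shows "card {v\<in>V. \<not> v ! j} = card {v\<in>V. v ! j}"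
    and "card V = 2 * card {v\<in>V. v ! j}"
proof -
  show half: "card {v\<in>V. \<not> v ! j} = card {v\<in>V. v ! j}"
    by (rule bsubspace_card_translate[OF V w(1)])
       (use w j bsubspace_length[OF V] in auto)
  have "V = {v\<in>V. v ! j} \<union> {v\<in>V. \<not> v ! j}" by blast
  then have "card V = card {v\<in>V. v ! j} + card {v\<in>V. \<not> v ! j}"
    using bsubspace_finite[OF V] by (metis (no_types, lifting) card_Un_disjoint
        disjoint_iff finite_Un mem_Collect_eq)
  then show "card V = 2 * card {v\<in>V. v ! j}" using half by simp
qed

lemma bsubspace_card_power_of_two: "bsubspace n V \<Longrightarrow> \<exists>k. card V = 2 ^ k"
proof (induction "card V" arbitrary: V rule: less_induct)
  case less
  note V = less.prems
  show ?case
  proof (cases "\<exists>w\<in>V. \<exists>j<n. w ! j")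
    case False
    have "V = {replicate n False}"
      using False V bsubspace_length[OF V] unfolding bsubspace_def
      by (auto intro!: nth_equalityI)
    then show ?thesis by (intro exI[of _ 0]) simp
  next
    case True
    then obtain w j where w: "w \<in> V" "j < n" "w ! j" by blast
    define V0 where "V0 = {v\<in>V. \<not> v ! j}"
    have V0: "bsubspace n V0"
      using V w(2) bsubspace_length[OF V] unfolding V0_def bsubspace_def by auto
    have card: "card V = 2 * card V0"
      using bsubspace_card_coordinate[OF V w(1,3,2)] unfolding V0_def by simp
    have "replicate n False \<in> V0" using V0 unfolding bsubspace_def by blast
    then have "card V0 > 0" using bsubspace_finite[OF V0] by (auto simp: card_gt_0_iff)
    then obtain k where "card V0 = 2 ^ k" using less.hyps[OF _ V0] card by auto
    then show ?thesis using card by (intro exI[of _ "Suc k"]) simp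
  qed
qed

text \<open>Coordinates that agree on every element of \<open>V\<close> are interchangeable in masked sums
  over \<open>V\<close>, so all the weight of such a class may be moved onto its least member.\<close>

definition coords_equiv :: "bool list set \<Rightarrow> nat \<Rightarrow> nat \<Rightarrow> bool" where
  "coords_equiv V j k \<longleftrightarrow> (\<forall>v\<in>V. v ! j = v ! k)"

definition class_rep :: "nat \<Rightarrow> bool list set \<Rightarrow> nat \<Rightarrow> bool" where
  "class_rep n V j \<longleftrightarrow> j < n \<and> (\<exists>v\<in>V. v ! j) \<and> (\<forall>i<j. \<not> coords_equiv V i j)"

definition class_sum :: "nat \<Rightarrow> bool list set \<Rightarrow> (nat \<Rightarrow> real) \<Rightarrow> nat \<Rightarrow> real" where
  "class_sum n V c j = (\<Sum>k<n. if coords_equiv V k j then c k else 0)"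

definition class_weights :: "nat \<Rightarrow> bool list set \<Rightarrow> (nat \<Rightarrow> real) \<Rightarrow> nat \<Rightarrow> real" where
  "class_weights n V c j = (if class_rep n V j then class_sum n V c j else 0)"

lemma class_reps_selected:
  assumes v: "v \<in> V" and k: "k < n"
  shows "{j\<in>{..<n}. v ! j \<and> class_rep n V j \<and> coords_equiv V k j}
           = (if v ! k then {LEAST i. coords_equiv V i k} else {})"
proof (cases "v ! k")
  case False
  then show ?thesis using v unfolding coords_equiv_def by auto
next
  case True
  define r where "r = (LEAST i. coords_equiv V i k)"
  have rk: "coords_equiv V r k" unfolding r_def by (rule LeastI[of _ k]) (simp add: coords_equiv_def)
  have "r \<le> k" unfolding r_def by (rule Least_le) (simp add: coords_equiv_def)
  moreover have "\<not> coords_equiv V i k" if "i < r" for i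
    using that not_less_Least unfolding r_def by blast
  ultimately have "r \<in> {j\<in>{..<n}. v ! j \<and> class_rep n V j \<and> coords_equiv V k j}"
    using rk True v k unfolding class_rep_def coords_equiv_def by auto
  moreover have "j = r" if "j \<in> {j\<in>{..<n}. v ! j \<and> class_rep n V j \<and> coords_equiv V k j}" for j
  proof -
    from that have rep: "class_rep n V j" and kj: "coords_equiv V k j" by auto
    have "r \<le> j" unfolding r_def by (rule Least_le) (use kj in \<open>simp add: coords_equiv_def\<close>)
    moreover have "coords_equiv V r j" using rk kj unfolding coords_equiv_def by simp
    ultimately show "j = r" using rep unfolding class_rep_def by (metis le_neq_implies_less)
  qed
  ultimately have "{j\<in>{..<n}. v ! j \<and> class_rep n V j \<and> coords_equiv V k j} = {r}" by blast
  then show ?thesis using True unfolding r_def by simp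
qed

lemma masked_sum_class_weights:
  assumes v: "v \<in> V"
  shows "masked_sum n (class_weights n V c) v = masked_sum n c v"
proof -
  have "masked_sum n (class_weights n V c) v
      = (\<Sum>j<n. \<Sum>k<n. if v ! j \<and> class_rep n V j \<and> coords_equiv V k j then c k else 0)"
    unfolding masked_sum_def class_weights_def class_sum_def by (rule sum.cong) auto
  also have "\<dots> = (\<Sum>k<n. \<Sum>j<n. if v ! j \<and> class_rep n V j \<and> coords_equiv V k j then c k else 0)"
    by (rule sum.swap)
  also have "\<dots> = masked_sum n c v"
    unfolding masked_sum_def
  proof (rule sum.cong[OF refl])
    fix k assume "k \<in> {..<n}"
    then have k: "k < n" by simp
    have "(\<Sum>j<n. if v ! j \<and> class_rep n V j \<and> coords_equiv V k j then c k else 0)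
        = (\<Sum>j\<in>{j\<in>{..<n}. v ! j \<and> class_rep n V j \<and> coords_equiv V k j}. c k)"
      by (simp only: sum.inter_filter[OF finite_lessThan])
    then show "(\<Sum>j<n. if v ! j \<and> class_rep n V j \<and> coords_equiv V k j then c k else 0)
               = (if v ! k then c k else 0)"
      unfolding class_reps_selected[OF v k] by simp
  qed
  finally show ?thesis .
qed

lemma bsubspace_character_sum:
  assumes V: "bsubspace n V" and j: "j < n" "\<exists>w\<in>V. w ! j" and k: "k < n"
  shows "(\<Sum>v\<in>V. if v ! k then (if v ! j then -1 else 1) else 0 :: real)
           = (if coords_equiv V k j then - real (card {v\<in>V. v ! j}) else 0)"
proof -
  have "(\<Sum>v\<in>V. if v ! k then (if v ! j then -1 else 1) else 0 :: real)
      = real (card {v\<in>V. v ! k \<and> \<not> v ! j}) - real (card {v\<in>V. v ! k \<and> v ! j})"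
    by (simp add: sum_indicator_card[OF bsubspace_finite[OF V], symmetric]
        sum_subtractf[symmetric]) (rule sum.cong, auto)
  also have "\<dots> = (if coords_equiv V k j then - real (card {v\<in>V. v ! j}) else 0)"
  proof (cases "coords_equiv V k j")
    case True
    then have "{v\<in>V. v ! k \<and> \<not> v ! j} = {}" "{v\<in>V. v ! k \<and> v ! j} = {v\<in>V. v ! j}"
      unfolding coords_equiv_def by auto
    then show ?thesis unfolding \<open>{v\<in>V. v ! k \<and> \<not> v ! j} = {}\<close> using True by simp
  next
    case False
    txt \<open>Some \<open>w \<in> V\<close> has \<open>w ! j\<close> but not \<open>w ! k\<close>; translating by it pairs off the two sets.\<close>
    obtain w0 where w0: "w0 \<in> V" "w0 ! j" using j(2) by blast
    obtain u where u: "u \<in> V" "u ! k \<noteq> u ! j" using False unfolding coords_equiv_def by auto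
    have "\<exists>w\<in>V. w ! j \<and> \<not> w ! k"
    proof (cases "u ! j \<or> \<not> w0 ! k")
      case True then show ?thesis using u w0 by auto
    next
      case False
      then show ?thesis
        using bsubspace_bxor[OF V w0(1) u(1)] bsubspace_length[OF V] w0 u j k
        by (intro bexI[of _ "bxor w0 u"]) auto
    qed
    then obtain w where w: "w \<in> V" "w ! j" "\<not> w ! k" by blast
    have "card {v\<in>V. v ! k \<and> \<not> v ! j} = card {v\<in>V. v ! k \<and> v ! j}"
      by (rule bsubspace_card_translate[OF V w(1)]) (use bsubspace_length[OF V] w j k in auto)
    then show ?thesis using False by simp
  qed
  finally show ?thesis .
qed

lemma class_sum_by_character:
  assumes V: "bsubspace n V" and j: "j < n" "\<exists>w\<in>V. w ! j"
  shows "(\<Sum>v\<in>V. (if v ! j then -1 else 1) * masked_sum n c v)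
           = - real (card {v\<in>V. v ! j}) * class_sum n V c j"
proof -
  have "(\<Sum>v\<in>V. (if v ! j then -1 else 1) * masked_sum n c v)
      = (\<Sum>k<n. (\<Sum>v\<in>V. if v ! k then (if v ! j then -1 else 1) else 0) * c k)"
    unfolding masked_sum_def sum_distrib_left sum_distrib_right
    by (subst sum.swap) (auto intro!: sum.cong)
  also have "\<dots> = - real (card {v\<in>V. v ! j}) * class_sum n V c j"
    unfolding class_sum_def sum_distrib_left
    by (rule sum.cong) (auto simp: bsubspace_character_sum[OF V j])
  finally show ?thesis .
qed

lemma class_weights_Ints:
  assumes V: "bsubspace n V" and int: "\<forall>v\<in>V. N * masked_sum n c v \<in> \<int>"
  shows "N * real (card V) * class_weights n V c j \<in> \<int>"
proof (cases "class_rep n V j")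
  case True
  then have j: "j < n" "\<exists>w\<in>V. w ! j" unfolding class_rep_def by auto
  then obtain w where "w \<in> V" "w ! j" by blast
  then have card: "card V = 2 * card {v\<in>V. v ! j}"
    using bsubspace_card_coordinate(2)[OF V _ _ j(1)] by blast
  have "(\<Sum>v\<in>V. (if v ! j then -1 else 1) * (N * masked_sum n c v)) \<in> \<int>"
    using int by (intro Ints_sum) auto
  also have "(\<Sum>v\<in>V. (if v ! j then -1 else 1) * (N * masked_sum n c v))
      = - (N * real (card {v\<in>V. v ! j}) * class_sum n V c j)"
    using class_sum_by_character[OF V j, of c]
    by (simp add: sum_distrib_left[symmetric] algebra_simps)
  finally have "- (N * real (card {v\<in>V. v ! j}) * class_sum n V c j) \<in> \<int>" .
  then have "(- 2) * (- (N * real (card {v\<in>V. v ! j}) * class_sum n V c j)) \<in> \<int>"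
    by (intro Ints_mult) auto
  then show ?thesis using True card by (simp add: class_weights_def algebra_simps)
qed (simp add: class_weights_def)

lemma bsubspace_dyadic_weights:
  assumes V: "bsubspace n V" and int: "\<forall>v\<in>V. 2 ^ m * masked_sum n c v \<in> \<int>"
  shows "\<exists>(a :: nat \<Rightarrow> int) K. \<forall>v\<in>V.
           masked_sum n c v = masked_sum n (\<lambda>j. of_int (a j) / 2 ^ K) v"
proof -
  obtain l where l: "card V = 2 ^ l" using bsubspace_card_power_of_two[OF V] by blast
  define a where "a j = \<lfloor>2 ^ (m + l) * class_weights n V c j\<rfloor>" for j
  have "2 ^ (m + l) * class_weights n V c j \<in> \<int>" for j
    using class_weights_Ints[OF V int, of j] l by (simp add: power_add)
  then have "of_int (a j) = 2 ^ (m + l) * class_weights n V c j" for j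
    unfolding a_def by (metis Ints_cases floor_of_int)
  then have "of_int (a j) / 2 ^ (m + l) = class_weights n V c j" for j
    by simp
  then show ?thesis
    using masked_sum_class_weights[of _ V n c] by (intro exI[of _ a] exI[of _ "m + l"]) simp
qed

lemma affine_dyadic_weights:
  assumes V: "bsubspace n (bxor b0 ` L)" and b0: "length b0 = n" and L: "\<forall>b\<in>L. length b = n"
    and int: "\<forall>b\<in>L. 2 ^ m * (masked_sum n \<theta> b - masked_sum n \<theta> b0) \<in> \<int>"
  shows "\<exists>(a :: nat \<Rightarrow> int) K. \<forall>b\<in>L. masked_sum n \<theta> b - masked_sum n \<theta> b0
           = masked_sum n (\<lambda>j. of_int (a j) / 2 ^ K) b - masked_sum n (\<lambda>j. of_int (a j) / 2 ^ K) b0"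
proof -
  have shift: "masked_sum n \<eta> b - masked_sum n \<eta> b0
      = masked_sum n (\<lambda>j. if b0 ! j then - \<eta> j else \<eta> j) (bxor b0 b)" if "b \<in> L" for \<eta> b
  proof -
    have "bxor (bxor b0 b) b0 = b"
      using b0 L that by (metis bxor_cancel_left bxor_commute)
    then show ?thesis using masked_sum_bxor_diff[of "bxor b0 b" n b0 \<eta>] b0 L that by simp
  qed
  define c where "c j = (if b0 ! j then - \<theta> j else \<theta> j)" for j
  have "\<forall>v\<in>bxor b0 ` L. 2 ^ m * masked_sum n c v \<in> \<int>"
    using int shift[of _ \<theta>] unfolding c_def by auto
  then obtain a K where a: "\<forall>v\<in>bxor b0 ` L.
      masked_sum n c v = masked_sum n (\<lambda>j. of_int (a j) / 2 ^ K) v"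
    using bsubspace_dyadic_weights[OF V] by blast
  define a' where "a' j = (if b0 ! j then - a j else a j)" for j
  have "(\<lambda>j. if b0 ! j then - (of_int (a' j) / 2 ^ K) else of_int (a' j) / 2 ^ K)
      = (\<lambda>j. of_int (a j) / (2 ^ K :: real))"
    unfolding a'_def by auto
  then show ?thesis
    using a shift[of _ \<theta>] shift[of _ "\<lambda>j. of_int (a' j) / 2 ^ K"] unfolding c_def
    by (intro exI[of _ a'] exI[of _ K]) auto
qed

lemma sum_masked_sum_translates:
  assumes G: "bsubspace n G" and b: "length b = n"
  shows "(\<Sum>x\<in>G. masked_sum n \<theta> (bxor x b) - masked_sum n \<theta> b)
           = (\<Sum>j<n. real (card {x\<in>G. x ! j}) * (if b ! j then - \<theta> j else \<theta> j))"
proof -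
  have "(\<Sum>x\<in>G. masked_sum n \<theta> (bxor x b) - masked_sum n \<theta> b)
      = (\<Sum>x\<in>G. masked_sum n (\<lambda>j. if b ! j then - \<theta> j else \<theta> j) x)"
    using masked_sum_bxor_diff bsubspace_length[OF G] b by (intro sum.cong) auto
  also have "\<dots> = (\<Sum>j<n. \<Sum>x\<in>G. (if x ! j then 1 else 0) * (if b ! j then - \<theta> j else \<theta> j))"
    unfolding masked_sum_def by (subst sum.swap) (intro sum.cong, auto)
  also have "\<dots> = (\<Sum>j<n. real (card {x\<in>G. x ! j}) * (if b ! j then - \<theta> j else \<theta> j))"
    by (simp only: sum_distrib_right[symmetric] sum_indicator_card[OF bsubspace_finite[OF G]])
  finally show ?thesis .
qed

text \<open>Averaging the integral phase differences over all of \<open>G\<close>: on a coordinate where \<open>b\<close>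
  and \<open>b0\<close> differ, exactly half of \<open>G\<close> flips it.\<close>
lemma card_mult_masked_sum_diff_Ints:
  assumes G: "bsubspace n G" and len: "length b = n" "length b0 = n"
    and int: "\<forall>x\<in>G. masked_sum n \<theta> (bxor x b) - masked_sum n \<theta> b \<in> \<int>"
      "\<forall>x\<in>G. masked_sum n \<theta> (bxor x b0) - masked_sum n \<theta> b0 \<in> \<int>"
    and cover: "\<forall>j<n. b ! j \<noteq> b0 ! j \<longrightarrow> (\<exists>x\<in>G. x ! j)"
  shows "real (card G) * (masked_sum n \<theta> b - masked_sum n \<theta> b0) \<in> \<int>"
proof -
  define t where "t b j = (if b ! j then - \<theta> j else \<theta> j)" for b j
  have coord: "real (card {x\<in>G. x ! j}) * (t b0 j - t b j)
      = real (card G) * ((if b ! j then \<theta> j else 0) - (if b0 ! j then \<theta> j else 0))" if j: "j < n" for j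
  proof (cases "b ! j = b0 ! j")
    case False
    then obtain w where "w \<in> G" "w ! j" using cover j by blast
    then have "card G = 2 * card {x\<in>G. x ! j}" using bsubspace_card_coordinate(2)[OF G _ _ j] by blast
    then show ?thesis unfolding t_def using False by (cases "b ! j") (auto simp: algebra_simps)
  qed (simp add: t_def)
  define D where "D b = (\<Sum>x\<in>G. masked_sum n \<theta> (bxor x b) - masked_sum n \<theta> b)" for b
  have "D b0 - D b = (\<Sum>j<n. real (card {x\<in>G. x ! j}) * (t b0 j - t b j))"
    unfolding D_def sum_masked_sum_translates[OF G len(1)] sum_masked_sum_translates[OF G len(2)] t_def
    by (simp add: sum_subtractf[symmetric] algebra_simps)
  also have "\<dots> = real (card G) * (masked_sum n \<theta> b - masked_sum n \<theta> b0)"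
    unfolding masked_sum_def sum_subtractf[symmetric] sum_distrib_left using coord by simp
  finally have diff: "D b0 - D b = real (card G) * (masked_sum n \<theta> b - masked_sum n \<theta> b0)" .
  have "D b0 \<in> \<int>" "D b \<in> \<int>" unfolding D_def using int by (simp_all add: Ints_sum)
  then show ?thesis unfolding diff[symmetric] by (rule Ints_diff)
qed

section \<open>Pauli operators and transversal rotations\<close>

definition zsign :: "bool list \<Rightarrow> bool list \<Rightarrow> complex" where
  "zsign z b = (-1) ^ length (filter id (map2 (\<and>) z b))"

lemma zsign_prod:
  assumes "length z = n" "length b = n"
  shows "zsign z b = (\<Prod>i<n. if z ! i \<and> b ! i then -1 else 1)"
proof -
  have "{i. i < length (map2 (\<and>) z b) \<and> id (map2 (\<and>) z b ! i)} = {i\<in>{..<n}. z ! i \<and> b ! i}"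
    using assms by auto
  then have "length (filter id (map2 (\<and>) z b)) = card {i\<in>{..<n}. z ! i \<and> b ! i}"
    by (simp only: length_filter_conv_card)
  moreover have "(\<Prod>i<n. if z ! i \<and> b ! i then -1 else 1 :: complex)
      = (-1) ^ card {i\<in>{..<n}. z ! i \<and> b ! i}"
    by (simp add: prod.inter_filter[OF finite_lessThan, symmetric])
  ultimately show ?thesis unfolding zsign_def by simp
qed

lemma zsign_bxor:
  "length z = n \<Longrightarrow> length a = n \<Longrightarrow> length b = n \<Longrightarrow> zsign z (bxor a b) = zsign z a * zsign z b"
  by (simp add: zsign_prod prod.distrib[symmetric]) (rule prod.cong, auto)

lemma zsign_square: "zsign z b * zsign z b = 1"
  unfolding zsign_def by (simp add: power_mult_distrib[symmetric])

lemma norm_zsign [simp]: "cmod (zsign z b) = 1"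
  by (simp add: zsign_def norm_power)

lemma pauli_mat_eq:
  "length x = n \<Longrightarrow> pauli_mat n c x z b b' =
     (if length b = n \<and> b' = bxor x b then \<i> ^ c * zsign z b' else 0)"
  unfolding pauli_mat_def zsign_def bxor_def[symmetric] using bxor_eq_iff[of x n b b'] by auto

lemma pauli_mat_eq_col:
  "length x = n \<Longrightarrow> pauli_mat n c x z b b' =
     (if length b' = n \<and> b = bxor x b' then \<i> ^ c * zsign z b' else 0)"
  by (auto simp: pauli_mat_eq bxor_cancel_left)

lemma mapply_pauli_mat:
  assumes "length x = n"
  shows "mapply n (pauli_mat n c x z) v b
           = (if length b = n then \<i> ^ c * zsign z (bxor x b) * v (bxor x b) else 0)"
proof (cases "length b = n")
  case True
  have "mapply n (pauli_mat n c x z) v b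
      = (\<Sum>e\<in>bitstrs n. if e = bxor x b then \<i> ^ c * zsign z e * v e else 0)"
    unfolding mapply_def by (rule sum.cong) (auto simp: pauli_mat_eq assms True)
  then show ?thesis using True assms by (simp add: sum_bitstrs_delta)
qed (simp add: mapply_def pauli_mat_eq assms)

lemma pauli_mat_mod_4: "pauli_mat n c x z = pauli_mat n (c mod 4) x z"
proof -
  have "\<i> ^ c = (\<i> ^ 4) ^ (c div 4) * \<i> ^ (c mod 4)"
    by (simp only: power_mult[symmetric] power_add[symmetric] mult_div_mod_eq)
  then have "\<i> ^ c = \<i> ^ (c mod 4)" by simp
  then show ?thesis unfolding pauli_mat_def by (simp only:)
qed

lemma zsign_replicate_False [simp]: "zsign (replicate n False) b = 1"
proof -
  have "filter id (map2 (\<and>) (replicate n False) b) = []"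
    by (auto simp: filter_empty_conv set_zip)
  then show ?thesis by (simp add: zsign_def)
qed

lemma idm_eq_pauli_mat: "idm n = pauli_mat n 0 (replicate n False) (replicate n False)"
  by (intro ext) (auto simp: idm_def pauli_mat_eq)

lemma mmult_assoc: "mmult n (mmult n A B) C = mmult n A (mmult n B C)"
  unfolding mmult_def
  by (intro ext) (simp add: sum_distrib_left sum_distrib_right mult.assoc, rule sum.swap)

lemma mmult_idm_pauli_mat:
  assumes "length x = n"
  shows "mmult n (idm n) (pauli_mat n c x z) = pauli_mat n c x z"
proof (intro ext)
  fix b d
  show "mmult n (idm n) (pauli_mat n c x z) b d = pauli_mat n c x z b d"
  proof (cases "length b = n")
    case True
    have "mmult n (idm n) (pauli_mat n c x z) b d
        = (\<Sum>e\<in>bitstrs n. if e = b then pauli_mat n c x z e d else 0)"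
      unfolding mmult_def idm_def by (rule sum.cong) (auto simp: True)
    then show ?thesis using sum_bitstrs_delta[OF True] by simp
  qed (simp add: mmult_def idm_def pauli_mat_eq assms)
qed

lemma mmult_madj_pauli_mat:
  assumes x: "length x = n"
  shows "mmult n (madj (pauli_mat n c x z)) (pauli_mat n c x z) = idm n"
proof (intro ext)
  fix b d
  let ?P = "pauli_mat n c x z"
  show "mmult n (madj ?P) ?P b d = idm n b d"
  proof (cases "length b = n")
    case True
    have unit: "cnj (\<i> ^ c * zsign z b) * (\<i> ^ c * zsign z b) = 1"
      using complex_norm_square[of "\<i> ^ c * zsign z b"] by (simp add: norm_mult norm_power mult.commute)
    have "mmult n (madj ?P) ?P b d
        = (\<Sum>e\<in>bitstrs n. if e = bxor x b then cnj (\<i> ^ c * zsign z b) * ?P e d else 0)"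
      unfolding mmult_def madj_def by (rule sum.cong) (auto simp: pauli_mat_eq_col x True)
    also have "\<dots> = cnj (\<i> ^ c * zsign z b) * ?P (bxor x b) d"
      by (rule sum_bitstrs_delta) (simp add: True x)
    also have "\<dots> = idm n b d"
      using True x unit by (auto simp: pauli_mat_eq idm_def bxor_cancel_left)
    finally show ?thesis .
  qed (auto simp: mmult_def madj_def idm_def pauli_mat_eq x intro!: sum.neutral)
qed

lemma mapply_zrot:
  "mapply n (zrot n \<theta>) v b = (if length b = n then cis (pi * masked_sum n \<theta> b) * v b else 0)"
proof -
  have prod_cis: "(\<Prod>j<n. if b ! j then cis (pi * \<theta> j) else 1) = cis (pi * masked_sum n \<theta> b)"
    unfolding masked_sum_def sum_distrib_left
    by (induction n) (auto simp: cis_mult)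
  show ?thesis
  proof (cases "length b = n")
    case True
    have "mapply n (zrot n \<theta>) v b = (\<Sum>e\<in>bitstrs n. if e = b then cis (pi * masked_sum n \<theta> b) * v e else 0)"
      unfolding mapply_def zrot_def prod_cis by (rule sum.cong) (auto simp: True)
    then show ?thesis using sum_bitstrs_delta[OF True] True by simp
  qed (simp add: mapply_def zrot_def)
qed

section \<open>Stabilizer codes\<close>

definition code_support :: "nat \<Rightarrow> qmat set \<Rightarrow> bool list set" where
  "code_support n S = {b. \<exists>v\<in>codespace n S. v b \<noteq> 0}"

definition stabilizer_xparts :: "nat \<Rightarrow> qmat set \<Rightarrow> bool list set" where
  "stabilizer_xparts n S = {x. \<exists>c z. length x = n \<and> length z = n \<and> pauli_mat n c x z \<in> S}"

lemma codespace_pauli_eq: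
  assumes "v \<in> codespace n S" "pauli_mat n c x z \<in> S" "length x = n" "length b = n"
  shows "v b = \<i> ^ c * zsign z (bxor x b) * v (bxor x b)"
proof -
  have "v b = mapply n (pauli_mat n c x z) v b" using assms(1,2) unfolding codespace_def by auto
  then show ?thesis using assms(3,4) by (simp add: mapply_pauli_mat)
qed

lemma code_support_length: "b \<in> code_support n S \<Longrightarrow> length b = n"
  unfolding code_support_def codespace_def by auto

context
  fixes n :: nat and S :: "qmat set"
  assumes S: "stabilizer_group n S"
begin

lemma stabilizer_pauli:
  assumes "A \<in> S"
  obtains c x z where "length x = n" "length z = n" "A = pauli_mat n c x z"
  using S assms unfolding stabilizer_group_def pauli_group_def by blast

lemma stabilizer_finite: "finite S"
proof -
  have "S \<subseteq> (\<lambda>(c, x, z). pauli_mat n c x z) ` ({..<4} \<times> bitstrs n \<times> bitstrs n)"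
  proof
    fix A assume "A \<in> S"
    then obtain c x z where "length x = n" "length z = n" "A = pauli_mat n c x z"
      by (rule stabilizer_pauli)
    then show "A \<in> (\<lambda>(c, x, z). pauli_mat n c x z) ` ({..<4} \<times> bitstrs n \<times> bitstrs n)"
      by (intro image_eqI[where x="(c mod 4, x, z)"]) (auto simp: bitstrs_def pauli_mat_mod_4[of n c])
  qed
  then show ?thesis by (rule finite_subset) (simp add: finite_bitstrs)
qed

lemma stabilizer_mult_bij: "g \<in> S \<Longrightarrow> bij_betw (mmult n g) S S"
proof -
  assume g: "g \<in> S"
  have cancel: "mmult n (madj g) (mmult n g h) = h" if "h \<in> S" for h
    using g that
    by (elim stabilizer_pauli) (simp add: mmult_assoc[symmetric] mmult_madj_pauli_mat mmult_idm_pauli_mat)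
  have inj: "inj_on (mmult n g) S"
    by (rule inj_on_inverseI[of _ "mmult n (madj g)"]) (rule cancel)
  moreover have "mmult n g ` S \<subseteq> S" using S g unfolding stabilizer_group_def by auto
  ultimately show ?thesis
    using card_image[OF inj] card_subset_eq[OF stabilizer_finite] by (simp add: bij_betw_def)
qed

lemma diagonal_pauli_in_code_support:
  assumes "b \<in> code_support n S" "h \<in> S"
  shows "h b b = 0 \<or> h b b = 1"
proof -
  obtain v where v: "v \<in> codespace n S" "v b \<noteq> 0" using assms(1) unfolding code_support_def by auto
  have b: "length b = n" using code_support_length[OF assms(1)] .
  obtain c x z where h: "length x = n" "length z = n" "h = pauli_mat n c x z"
    using assms(2) by (rule stabilizer_pauli)
  show ?thesis
  proof (cases "b = bxor x b")
    case True
    then have "v b = \<i> ^ c * zsign z b * v b"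
      using codespace_pauli_eq[OF v(1) _ h(1) b] assms(2) h(3) by metis
    then show ?thesis using v(2) h b True by (simp add: pauli_mat_eq)
  qed (use h b in \<open>simp add: pauli_mat_eq\<close>)
qed

text \<open>Conversely, the \<open>b\<close>-th column of \<open>\<Sum>h\<in>S. h\<close> (a multiple of the projector onto the code
  space) is a code vector whose \<open>b\<close>-entry is \<open>1\<close> plus a sum of terms in \<open>{0, 1}\<close>.\<close>
lemma code_support_iff:
  "b \<in> code_support n S \<longleftrightarrow> length b = n \<and> (\<forall>h\<in>S. h b b = 0 \<or> h b b = 1)"
proof (intro iffI)
  assume "length b = n \<and> (\<forall>h\<in>S. h b b = 0 \<or> h b b = 1)"
  then have b: "length b = n" and diag: "\<forall>h\<in>S. h b b = 0 \<or> h b b = 1" by auto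
  define w where "w b' = (\<Sum>h\<in>S. h b' b)" for b'
  have "w b' = 0" if "length b' \<noteq> n" for b'
    unfolding w_def using that by (intro sum.neutral ballI) (auto elim!: stabilizer_pauli simp: pauli_mat_eq)
  moreover have "mapply n g w = w" if g: "g \<in> S" for g
  proof
    fix b'
    have "mapply n g w b' = (\<Sum>h\<in>S. mmult n g h b' b)"
      unfolding mapply_def w_def mmult_def by (simp add: sum_distrib_left, rule sum.swap)
    also have "\<dots> = w b'"
      unfolding w_def using sum.reindex_bij_betw[OF stabilizer_mult_bij[OF g], of "\<lambda>h. h b' b"] .
    finally show "mapply n g w b' = w b'" .
  qed
  ultimately have w: "w \<in> codespace n S" unfolding codespace_def by auto
  have idm: "idm n \<in> S" using S unfolding stabilizer_group_def by blast
  have "Re (idm n b b) \<le> Re (w b)"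
    unfolding w_def Re_sum using diag
    by (intro member_le_sum[OF idm _ stabilizer_finite]) auto
  then have "w b \<noteq> 0" using b by (auto simp: idm_def)
  then show "b \<in> code_support n S" unfolding code_support_def using w by auto
qed (auto simp: code_support_length diagonal_pauli_in_code_support)


lemma code_support_affine:
  assumes L: "b1 \<in> code_support n S" "b2 \<in> code_support n S" "b3 \<in> code_support n S"
  shows "bxor b1 (bxor b2 b3) \<in> code_support n S"
proof -
  have len: "length b1 = n" "length b2 = n" "length b3 = n" using L by (auto simp: code_support_length)
  define b where "b = bxor b1 (bxor b2 b3)"
  have b: "length b = n" unfolding b_def using len by simp
  have "h b b = 0 \<or> h b b = 1" if h: "h \<in> S" for h
  proof -
    obtain c x z where P: "length x = n" "length z = n" "h = pauli_mat n c x z"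
      using h by (rule stabilizer_pauli)
    have diag: "h e e = (if \<forall>i<n. \<not> x ! i then \<i> ^ c * zsign z e else 0)" if "length e = n" for e
    proof -
      have "(e = bxor x e) = (\<forall>i<n. \<not> x ! i)"
        using P(1) that by (auto simp: list_eq_iff_nth_eq)
      then show ?thesis using P that by (simp add: pauli_mat_eq)
    qed
    show ?thesis
    proof (cases "\<forall>i<n. \<not> x ! i")
      case True
      txt \<open>A diagonal stabilizer equals \<open>1\<close> on the whole support, so \<open>zsign z\<close> is constant
        there, and \<open>zsign z b\<close> is the product of three equal signs.\<close>
      have one: "\<i> ^ c * zsign z e = 1" if "e \<in> code_support n S" for e
      proof -
        have "\<i> ^ c * zsign z e \<noteq> 0" by (simp add: zsign_def)
        then show ?thesis
          using diagonal_pauli_in_code_support[OF that h] diag[OF code_support_length[OF that]] True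
          by auto
      qed
      have "zsign z b2 = zsign z b1" "zsign z b3 = zsign z b1"
        using one[OF L(1)] one[OF L(2)] one[OF L(3)] by (metis mult_left_cancel zero_neq_one mult_zero_left)+
      then have "\<i> ^ c * zsign z b = (\<i> ^ c * zsign z b1) * (zsign z b1 * zsign z b1)"
        unfolding b_def using len P(2) by (simp add: zsign_bxor mult.assoc)
      then show ?thesis using one[OF L(1)] diag[OF b] True by (simp add: zsign_square)
    qed (use diag[OF b] in auto)
  qed
  then show ?thesis using b code_support_iff unfolding b_def by blast
qed

lemma bsubspace_stabilizer_xparts: "bsubspace n (stabilizer_xparts n S)"
  unfolding bsubspace_def
proof (intro conjI ballI)
  show "replicate n False \<in> stabilizer_xparts n S"
  proof -
    have "pauli_mat n 0 (replicate n False) (replicate n False) \<in> S"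
      using S unfolding stabilizer_group_def idm_eq_pauli_mat by blast
    then show ?thesis unfolding stabilizer_xparts_def by (intro CollectI exI conjI) auto
  qed
  fix x x' assume x: "x \<in> stabilizer_xparts n S" and x': "x' \<in> stabilizer_xparts n S"
  then show "length x = n" unfolding stabilizer_xparts_def by blast
  obtain c z c' z' where P: "length x = n" "pauli_mat n c x z \<in> S"
    and P': "length x' = n" "pauli_mat n c' x' z' \<in> S"
    using x x' unfolding stabilizer_xparts_def by blast
  define M where "M = mmult n (pauli_mat n c x z) (pauli_mat n c' x' z')"
  have M: "M \<in> S" unfolding M_def using S P(2) P'(2) unfolding stabilizer_group_def by blast
  then obtain C X Z where MP: "length X = n" "length Z = n" "M = pauli_mat n C X Z"
    by (rule stabilizer_pauli)
  txt \<open>The product maps \<open>|0\<rangle>\<close> to a multiple of \<open>|x \<oplus> x'\<rangle>\<close>.\<close>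
  define zero where "zero = replicate n False"
  have "M zero (bxor x' x) = (\<Sum>e\<in>bitstrs n. if e = x then
      \<i> ^ c * zsign z x * pauli_mat n c' x' z' e (bxor x' x) else 0)"
    unfolding M_def mmult_def zero_def
    by (rule sum.cong) (auto simp: pauli_mat_eq P(1) bxor_commute[of x])
  also have "\<dots> = \<i> ^ c * zsign z x * pauli_mat n c' x' z' x (bxor x' x)"
    by (rule sum_bitstrs_delta[OF P(1)])
  also have "\<dots> \<noteq> 0"
    using P P' by (auto simp: pauli_mat_eq zsign_def)
  finally have "bxor x' x = bxor X zero"
    using MP zero_def by (auto simp: pauli_mat_eq split: if_splits)
  then have "X = bxor x x'"
    using MP(1) by (simp add: zero_def bxor_commute[of X] bxor_commute[of x'])
  then show "bxor x x' \<in> stabilizer_xparts n S"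
    using M MP unfolding stabilizer_xparts_def by blast
qed

end

section \<open>Transversal rotations on a stabilizer code\<close>

definition unit_bits :: "nat \<Rightarrow> nat \<Rightarrow> bool list" where
  "unit_bits n j = map (\<lambda>i. i = j) [0..<n]"

lemma zsign_unit_bits:
  assumes "j < n" "length b = n"
  shows "zsign (unit_bits n j) b = (if b ! j then -1 else 1)"
proof -
  have "zsign (unit_bits n j) b = (\<Prod>i<n. if unit_bits n j ! i \<and> b ! i then -1 else 1)"
    by (rule zsign_prod) (simp_all add: unit_bits_def assms)
  also have "\<dots> = (\<Prod>i<n. if i = j then (if b ! j then -1 else 1) else 1)"
    by (rule prod.cong) (auto simp: unit_bits_def)
  finally show ?thesis using assms(1) by (simp only: prod.delta[OF finite_lessThan]) simp
qed

lemma pauli_Z_conj_eq: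
  assumes j: "j < n" and x: "length x = n" "\<not> x ! j"
  defines "Z \<equiv> pauli_mat n 0 (replicate n False) (unit_bits n j)"
  shows "mmult n (mmult n Z (pauli_mat n c x z)) (madj Z) = pauli_mat n c x z"
proof (intro ext)
  fix b d
  define A where "A = pauli_mat n c x z"
  define s where "s b = (if b ! j then -1 else (1::complex))" for b
  have Z: "Z b e = (if length b = n \<and> e = b then s b else 0)" for b e
    unfolding Z_def s_def using j by (auto simp: pauli_mat_eq zsign_unit_bits)
  have ZA: "mmult n Z A b' d' = (if length b' = n then s b' * A b' d' else 0)" for b' d'
  proof (cases "length b' = n")
    case True
    have "mmult n Z A b' d' = (\<Sum>e\<in>bitstrs n. if e = b' then s b' * A e d' else 0)"
      unfolding mmult_def by (rule sum.cong) (auto simp: Z True)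
    then show ?thesis using True sum_bitstrs_delta[OF True, of "\<lambda>e. s b' * A e d'"] by simp
  qed (simp add: mmult_def Z)
  have ZAZ: "mmult n (mmult n Z A) (madj Z) b d = (if length d = n then mmult n Z A b d * s d else 0)"
  proof (cases "length d = n")
    case True
    have "mmult n (mmult n Z A) (madj Z) b d = (\<Sum>e\<in>bitstrs n. if e = d then mmult n Z A b e * s d else 0)"
      unfolding mmult_def[of n "mmult n Z A"] madj_def by (rule sum.cong) (auto simp: Z True s_def)
    then show ?thesis using True sum_bitstrs_delta[OF True, of "\<lambda>e. mmult n Z A b e * s d"] by simp
  qed (simp add: mmult_def[of n "mmult n Z A"] madj_def Z)
  show "mmult n (mmult n Z A) (madj Z) b d = A b d"
  proof (cases "A b d = 0")
    case False
    then have "length b = n" "length d = n" "d = bxor x b"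
      unfolding A_def using x(1) by (auto simp: pauli_mat_eq split: if_splits)
    then have "s b * s d = 1" using x j by (simp add: s_def)
    then show ?thesis using ZA ZAZ \<open>length b = n\<close> \<open>length d = n\<close> by (simp add: algebra_simps)
  qed (simp add: ZA ZAZ)
qed

text \<open>If no stabilizer flips qubit \<open>j\<close>, then \<open>Z\<^sub>j\<close> commutes with \<open>S\<close>; having weight one, it
  must lie in \<open>S\<close> up to phase, and then it is constant on the support.\<close>
lemma code_support_coordinate_covered:
  assumes S: "stabilizer_group n S" and d: "nontrivial_code n S" and j: "j < n"
    and b: "b \<in> code_support n S" and b': "b' \<in> code_support n S" and ne: "b ! j \<noteq> b' ! j"
  shows "\<exists>x\<in>stabilizer_xparts n S. x ! j"
proof (rule ccontr)
  assume uncovered: "\<not> (\<exists>x\<in>stabilizer_xparts n S. x ! j)"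
  define Z where "Z c = pauli_mat n c (replicate n False) (unit_bits n j)" for c
  have "(\<lambda>A. mmult n (mmult n (Z 0) A) (madj (Z 0))) ` S = S"
  proof (rule image_cong[of S S _ id, simplified])
    fix A assume A: "A \<in> S"
    then obtain c x z where P: "length x = n" "length z = n" "A = pauli_mat n c x z"
      using S by (elim stabilizer_pauli)
    then have "\<not> x ! j" using uncovered A unfolding stabilizer_xparts_def by blast
    then show "mmult n (mmult n (Z 0) A) (madj (Z 0)) = A"
      using pauli_Z_conj_eq[OF j P(1)] P(3) unfolding Z_def by simp
  qed
  moreover have "Z c \<notin> S" for c
  proof
    assume ZS: "Z c \<in> S"
    have "\<i> ^ c * zsign (unit_bits n j) e = 1" if e: "e \<in> code_support n S" for e
    proof -
      obtain v where v: "v \<in> codespace n S" "v e \<noteq> 0" using e unfolding code_support_def by auto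
      have "v e = \<i> ^ c * zsign (unit_bits n j) e * v e"
        using codespace_pauli_eq[OF v(1) ZS[unfolded Z_def]] code_support_length[OF e] by simp
      then show ?thesis using v(2) by simp
    qed
    then have "\<i> ^ c * zsign (unit_bits n j) b = \<i> ^ c * zsign (unit_bits n j) b'"
      using b b' by simp
    then show False
      using b b' ne j by (auto simp: zsign_unit_bits code_support_length split: if_splits)
  qed
  ultimately have "is_logical n S 0 (replicate n False) (unit_bits n j)"
    unfolding is_logical_def Z_def by (simp add: unit_bits_def)
  then have "pweight n (replicate n False) (unit_bits n j) \<ge> 2"
    using d unfolding nontrivial_code_def by blast
  moreover have "{i. i < n \<and> (replicate n False ! i \<or> unit_bits n j ! i)} = {j}"
    using j by (auto simp: unit_bits_def)
  ultimately show False unfolding pweight_def by simp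
qed

lemma cis_pi_eq_imp_diff_Ints:
  assumes "cis (pi * x) = cis (pi * y)"
  shows "x - y \<in> \<int>"
proof -
  have "sin (pi * x) = sin (pi * y) \<and> cos (pi * x) = cos (pi * y)"
    using arg_cong[OF assms, of Re] arg_cong[OF assms, of Im] by simp
  then obtain k :: int where "pi * x = pi * y + 2 * pi * k" using sin_cos_eq_iff by blast
  then have "pi * x = pi * (y + 2 * k)" by (simp add: algebra_simps)
  then have "x - y = of_int (2 * k)" by simp
  then show ?thesis by (metis Ints_of_int)
qed

text \<open>A stabilizer with \<open>X\<close>-part \<open>x\<close> ties the amplitudes of every code vector at \<open>b\<close> and
  \<open>x \<oplus> b\<close>; a diagonal map preserving the code space must therefore give both the same phase.\<close>
lemma zrot_phase_diff_Ints:
  assumes inv: "\<forall>v\<in>codespace n S. mapply n (zrot n \<theta>) v \<in> codespace n S"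
    and b: "b \<in> code_support n S" and x: "x \<in> stabilizer_xparts n S"
  shows "masked_sum n \<theta> (bxor x b) - masked_sum n \<theta> b \<in> \<int>"
proof -
  obtain v where v: "v \<in> codespace n S" "v b \<noteq> 0" using b unfolding code_support_def by auto
  obtain c z where P: "length x = n" "pauli_mat n c x z \<in> S"
    using x unfolding stabilizer_xparts_def by auto
  have lb: "length b = n" using code_support_length[OF b] .
  define w where "w = mapply n (zrot n \<theta>) v"
  have w: "w \<in> codespace n S" using inv v(1) unfolding w_def by blast
  have "cis (pi * masked_sum n \<theta> b) * v b = w b"
    using lb by (simp add: w_def mapply_zrot)
  also have "\<dots> = \<i> ^ c * zsign z (bxor x b) * w (bxor x b)"
    by (rule codespace_pauli_eq[OF w P(2,1) lb])
  also have "\<dots> = cis (pi * masked_sum n \<theta> (bxor x b)) * (\<i> ^ c * zsign z (bxor x b) * v (bxor x b))"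
    using lb P(1) by (simp add: w_def mapply_zrot)
  also have "\<dots> = cis (pi * masked_sum n \<theta> (bxor x b)) * v b"
    using codespace_pauli_eq[OF v(1) P(2,1) lb] by simp
  finally show ?thesis using v(2) cis_pi_eq_imp_diff_Ints by simp
qed

lemma code_support_phase_dyadic:
  assumes S: "stabilizer_group n S" and d: "nontrivial_code n S"
    and inv: "\<forall>v\<in>codespace n S. mapply n (zrot n \<theta>) v \<in> codespace n S"
    and b0: "b0 \<in> code_support n S"
  shows "\<exists>(a :: nat \<Rightarrow> int) K. \<forall>b\<in>code_support n S.
           masked_sum n \<theta> b - masked_sum n \<theta> b0
           = masked_sum n (\<lambda>j. of_int (a j) / 2 ^ K) b - masked_sum n (\<lambda>j. of_int (a j) / 2 ^ K) b0"
proof -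
  let ?G = "stabilizer_xparts n S"
  have G: "bsubspace n ?G" by (rule bsubspace_stabilizer_xparts[OF S])
  obtain m where m: "card ?G = 2 ^ m" using bsubspace_card_power_of_two[OF G] by blast
  have "2 ^ m * (masked_sum n \<theta> b - masked_sum n \<theta> b0) \<in> \<int>" if b: "b \<in> code_support n S" for b
    using card_mult_masked_sum_diff_Ints[OF G, of b b0 \<theta>] m b b0
      zrot_phase_diff_Ints[OF inv] code_support_coordinate_covered[OF S d _ b b0]
    by (simp add: code_support_length)
  moreover have "bsubspace n (bxor b0 ` code_support n S)"
    by (rule bsubspace_translate_affine[OF code_support_length b0 code_support_affine[OF S]])
  ultimately show ?thesis
    by (intro affine_dyadic_weights[of n b0 _ m]) (auto simp: code_support_length[OF b0] code_support_length)
qed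

lemma zrot_codespace_eq:
  assumes "\<forall>b\<in>code_support n S.
             masked_sum n \<theta> b - masked_sum n \<theta> b0 = masked_sum n \<eta> b - masked_sum n \<eta> b0"
  shows "\<forall>v\<in>codespace n S. mapply n (zrot n \<theta>) v
           = (\<lambda>b. cis (pi * (masked_sum n \<theta> b0 - masked_sum n \<eta> b0)) * mapply n (zrot n \<eta>) v b)"
proof (intro ballI ext)
  fix v b assume v: "v \<in> codespace n S"
  show "mapply n (zrot n \<theta>) v b
      = cis (pi * (masked_sum n \<theta> b0 - masked_sum n \<eta> b0)) * mapply n (zrot n \<eta>) v b"
  proof (cases "v b = 0")
    case False
    then have "b \<in> code_support n S" using v unfolding code_support_def by auto
    then have "masked_sum n \<theta> b = (masked_sum n \<theta> b0 - masked_sum n \<eta> b0) + masked_sum n \<eta> b"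
      using assms by fastforce
    then show ?thesis by (simp add: mapply_zrot cis_mult distrib_left)
  qed (simp add: mapply_zrot)
qed

theorem proposition7:
  fixes n :: nat and S :: "qmat set" and \<theta> :: "nat \<Rightarrow> real"
  assumes "stabilizer_group n S"
    and "nontrivial_code n S"
    and "implements_nontrivial_logical n S (zrot n \<theta>)"
  shows "\<exists>(a :: nat \<Rightarrow> int) (k :: nat) (c :: complex). cmod c = 1 \<and>
           (\<forall>v\<in>codespace n S.
              mapply n (zrot n \<theta>) v =
              (\<lambda>b. c * mapply n (zrot n (\<lambda>j. real_of_int (a j) / 2 ^ k)) v b))"
proof -
  have inv: "\<forall>v\<in>codespace n S. mapply n (zrot n \<theta>) v \<in> codespace n S"
    using assms(3) unfolding implements_nontrivial_logical_def by blast
  obtain b0 and a :: "nat \<Rightarrow> int" and k where "\<forall>b\<in>code_support n S.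
      masked_sum n \<theta> b - masked_sum n \<theta> b0
      = masked_sum n (\<lambda>j. of_int (a j) / 2 ^ k) b - masked_sum n (\<lambda>j. of_int (a j) / 2 ^ k) b0"
  proof (cases "code_support n S = {}")
    case False
    then obtain b0 where "b0 \<in> code_support n S" by blast
    then show ?thesis using that code_support_phase_dyadic[OF assms(1,2) inv] by blast
  qed (use that in blast)
  then show ?thesis
    using zrot_codespace_eq by (intro exI conjI) auto
qed

end
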